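(* Let $d \ge 1$ and $k \ge 1$ be integers. If $P \subseteq \mathbb{R}^d$ is a convex lattice polytope (all vertices in $\mathbb{Z}^d$) that does not contain a lattice segment of length $k$, then $|P \cap \mathbb{Z}^d| \le k^d$.
   Context: For $x,y \in \mathbb{Z}^d$, the line segment $[x,y]$ is called a lattice segment of length $m-1$ if $|[x,y]\cap \mathbb{Z}^d| = m$. Equivalently, a lattice segment of length $k$ is the convex hull of a set $\{x, x+z, x+2z,\dots,x+kz\}$ with $x,z\in\mathbb{Z}^d$, $z \ne 0$, and $z$ primitive; and $P$ contains a lattice segment of length $k$ if and only if $P$ contains a set $\{x, x+z, \dots, x+kz\}$ with $x,z\in\mathbb{Z}^d$, $z\neq 0$. *)

theory Defs
  imports "HOL-Analysis.Analysis"
begin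

text \<open>Integer lattice points of R^d, with d the cardinality of the finite index type.\<close>
definition lattice_points :: "(real ^ 'n) set" where
  "lattice_points = {x. \<forall>i. x $ i \<in> \<int>}"

definition lattice_polytope :: "(real ^ 'n) set \<Rightarrow> bool" where
  "lattice_polytope P \<longleftrightarrow>
     (\<exists>V. finite V \<and> V \<subseteq> lattice_points \<and> P = convex hull V)"

definition contains_lattice_segment :: "(real ^ 'n) set \<Rightarrow> nat \<Rightarrow> bool" where
  "contains_lattice_segment P k \<longleftrightarrow>
     (\<exists>x z. x \<in> lattice_points \<and> z \<in> lattice_points \<and> z \<noteq> 0 \<and>
            (\<forall>j\<in>{0..k}. x + real j *\<^sub>R z \<in> P))"

end

theory Submission
  imports Defs
begin

text \<open>Pigeonhole modulo k: if P has more than k^d lattice points, two distinct ones x, y agree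
  coordinatewise modulo k, so y = x + k w for a nonzero lattice vector w. By convexity P then
  contains x, x + w, ..., x + k w, a lattice segment of length k.\<close>

definition lattice_residue :: "nat \<Rightarrow> real ^ 'n \<Rightarrow> 'n \<Rightarrow> int" where
  "lattice_residue k x = (\<lambda>i. \<lfloor>x $ i\<rfloor> mod int k)"

lemma lattice_points_of_int_floor:
  assumes "x \<in> lattice_points"
  shows "of_int \<lfloor>x $ i\<rfloor> = x $ i"
  using assms unfolding lattice_points_def by auto

lemma card_image_lattice_residue_le:
  fixes A :: "(real ^ 'n) set"
  assumes "k \<ge> 1"
  shows "card (lattice_residue k ` A) \<le> k ^ CARD('n)"
proof -
  let ?T = "PiE (UNIV :: 'n set) (\<lambda>_. {0..<int k})"
  have "lattice_residue k ` A \<subseteq> ?T"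
    using assms by (auto simp: lattice_residue_def)
  then have "card (lattice_residue k ` A) \<le> card ?T"
    by (intro card_mono) (simp_all add: finite_PiE)
  also have "card ?T = k ^ CARD('n)"
    by (simp add: card_PiE)
  finally show ?thesis .
qed

lemma lattice_residue_eq_imp_scaled_diff:
  fixes x y :: "real ^ 'n"
  assumes "x \<in> lattice_points" "y \<in> lattice_points"
    and "lattice_residue k x = lattice_residue k y"
  obtains w where "w \<in> lattice_points" "y = x + real k *\<^sub>R w"
proof
  define w :: "real ^ 'n" where
    "w = (\<chi> i. of_int ((\<lfloor>y $ i\<rfloor> - \<lfloor>x $ i\<rfloor>) div int k))"
  show "w \<in> lattice_points"
    unfolding lattice_points_def w_def by simp
  show "y = x + real k *\<^sub>R w"
  proof (rule vec_eq_iff[THEN iffD2, rule_format])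
    fix i
    have "\<lfloor>x $ i\<rfloor> mod int k = \<lfloor>y $ i\<rfloor> mod int k"
      using assms(3) unfolding lattice_residue_def by meson
    then have "int k dvd \<lfloor>y $ i\<rfloor> - \<lfloor>x $ i\<rfloor>"
      by (metis mod_eq_dvd_iff)
    then have "real k * of_int ((\<lfloor>y $ i\<rfloor> - \<lfloor>x $ i\<rfloor>) div int k) = of_int (\<lfloor>y $ i\<rfloor> - \<lfloor>x $ i\<rfloor>)"
      by (metis dvd_mult_div_cancel of_int_mult of_int_of_nat_eq)
    then show "y $ i = (x + real k *\<^sub>R w) $ i"
      using lattice_points_of_int_floor[OF assms(1), of i] lattice_points_of_int_floor[OF assms(2), of i]
      by (simp add: w_def)
  qed
qed

lemma convex_contains_arithmetic_progression:
  fixes x w :: "'a :: real_vector"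
  assumes "convex S" "x \<in> S" "x + real k *\<^sub>R w \<in> S" "j \<le> k"
  shows "x + real j *\<^sub>R w \<in> S"
proof (cases "k = 0")
  case True
  then show ?thesis using assms by simp
next
  case False
  define t where "t = real j / real k"
  have "0 \<le> t" "t \<le> 1"
    using assms(4) False by (auto simp: t_def)
  moreover have "x + real j *\<^sub>R w = (1 - t) *\<^sub>R x + t *\<^sub>R (x + real k *\<^sub>R w)"
    using False by (simp add: t_def algebra_simps)
  ultimately show ?thesis
    using assms(1-3) by (metis convexD_alt)
qed

lemma inj_on_lattice_residue:
  assumes "convex P" "\<not> contains_lattice_segment P k"
  shows "inj_on (lattice_residue k) (P \<inter> lattice_points)"
proof (rule inj_onI)
  fix x y
  assume x: "x \<in> P \<inter> lattice_points" and y: "y \<in> P \<inter> lattice_points"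
    and residue: "lattice_residue k x = lattice_residue k y"
  obtain w where w: "w \<in> lattice_points" "y = x + real k *\<^sub>R w"
    using lattice_residue_eq_imp_scaled_diff x y residue by blast
  have "\<forall>j\<in>{0..k}. x + real j *\<^sub>R w \<in> P"
    using convex_contains_arithmetic_progression[OF assms(1)] x y w(2) by auto
  then have "w = 0"
    using assms(2) x w(1) unfolding contains_lattice_segment_def by blast
  then show "x = y"
    using w(2) by simp
qed

lemma card_convex_lattice_points_le:
  fixes P :: "(real ^ 'n) set"
  assumes "k \<ge> 1" "convex P" "\<not> contains_lattice_segment P k"
  shows "card (P \<inter> lattice_points) \<le> k ^ CARD('n)"
proof -
  have "card (P \<inter> lattice_points) = card (lattice_residue k ` (P \<inter> lattice_points))"
    using inj_on_lattice_residue[OF assms(2,3)] by (simp add: card_image)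
  also have "\<dots> \<le> k ^ CARD('n)"
    using card_image_lattice_residue_le[OF assms(1)] .
  finally show ?thesis .
qed

theorem proposition3p2:
  fixes P :: "(real ^ 'n) set" and k :: nat
  assumes "k \<ge> 1"
    and "lattice_polytope P"
    and "\<not> contains_lattice_segment P k"
  shows "card (P \<inter> lattice_points) \<le> k ^ CARD('n)"
proof -
  have "convex P"
    using assms(2) unfolding lattice_polytope_def by (auto intro: convex_convex_hull)
  then show ?thesis
    using card_convex_lattice_points_le assms(1,3) by blast
qed

end
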